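(* Every generalized approval-based committee scoring (GABCS) rule is a linear mapping.
   Context: Let $\mathcal A=[m]=\{1,\dots,m\}$ be the set of alternatives and $k\le m$; let $\mathcal A_k$ denote the set of all $k$-element subsets ($k$-committees) of $\mathcal A$. The preference space is $\mathcal E=2^{\mathcal A}$ (approval ballots). A profile is a finite nonempty sequence $P=(A_1,\dots,A_n)\in\mathcal E^n$, $n\ge1$; $\mathcal E^*=\bigcup_{n\ge1}\mathcal E^n$. The histogram $\mathrm{Hist}(P)\in\mathbb Z_{\ge0}^{|\mathcal E|}$ records for each $A\in\mathcal E$ the number of indices $j$ with $A_j=A$. A mapping $f:\mathcal E^*\to\mathcal D$ (with $\mathcal E,\mathcal D$ finite) is linear if there exist finitely many vectors $\vec h_1,\dots,\vec h_K\in\mathbb R^{|\mathcal E|}$ and a function $g:\{+,-,0\}^K\to\mathcal D$ such that for every profile $P$, $f(P)=g(\sigma_1,\dots,\sigma_K)$, where $\sigma_t$ is $+$, $-$ or $0$ according as $\mathrm{Hist}(P)\cdot\vec h_t$ is $>0$, $<0$ or $=0$. A GABCS rule is specified by a function $\mathbf s:2^{\mathcal A}\times\mathcal A_k\to\mathbb R$ and maps a profile $P$ to the set $\arg\max_{W\in\mathcal A_k}\sum_{j=1}^n\mathbf s(A_j,W)$ (a nonempty subset of $\mathcal A_k$); the decision space is $\mathcal D=2^{\mathcal A_k}$. *)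

theory Defs
  imports Complex_Main
begin

datatype sign = Pos | Neg | Zero

definition sign_of :: "real \<Rightarrow> sign" where
  "sign_of x = (if x > 0 then Pos else if x < 0 then Neg else Zero)"

definition profiles :: "'e set \<Rightarrow> 'e list set" where
  "profiles E = {P. P \<noteq> [] \<and> set P \<subseteq> E}"

definition Hist :: "'e list \<Rightarrow> 'e \<Rightarrow> nat" where
  "Hist P A = count_list P A"

definition hist_dot :: "'e set \<Rightarrow> 'e list \<Rightarrow> ('e \<Rightarrow> real) \<Rightarrow> real" where
  "hist_dot E P h = (\<Sum>A\<in>E. real (Hist P A) * h A)"

definition linear_mapping :: "'e set \<Rightarrow> ('e list \<Rightarrow> 'd) \<Rightarrow> bool" where
  "linear_mapping E f \<longleftrightarrow>
     (\<exists>(K::nat) (h :: nat \<Rightarrow> 'e \<Rightarrow> real) (g :: sign list \<Rightarrow> 'd).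
        \<forall>P \<in> profiles E. f P = g (map (\<lambda>t. sign_of (hist_dot E P (h t))) [0..<K]))"

definition committees :: "nat \<Rightarrow> nat \<Rightarrow> nat set set" where
  "committees m k = {W. W \<subseteq> {1..m} \<and> card W = k}"

definition gabcs :: "nat \<Rightarrow> nat \<Rightarrow> (nat set \<Rightarrow> nat set \<Rightarrow> real) \<Rightarrow> nat set list \<Rightarrow> nat set set" where
  "gabcs m k s P = {W \<in> committees m k.
      \<forall>W' \<in> committees m k. (\<Sum>j<length P. s (P ! j) W') \<le> (\<Sum>j<length P. s (P ! j) W)}"

end

theory Submission
  imports Defs
begin

text \<open>The total score of a committee W is the dot product of the histogram with the
  vector s(-, W), so whether W scores at least as much as W' is read off the sign of the
  histogram against s(-, W) - s(-, W'). Hence the winning set is a function of the sign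
  pattern of the histogram against these finitely many vectors, one per ordered pair of
  committees, and any mapping of that kind is linear.\<close>

lemma hist_dot_Cons:
  assumes "finite E" "x \<in> E"
  shows "hist_dot E (x # P) f = f x + hist_dot E P f"
proof -
  have "hist_dot E (x # P) f = (\<Sum>A\<in>E. (if A = x then f A else 0) + real (Hist P A) * f A)"
    unfolding hist_dot_def Hist_def by (intro sum.cong) (auto simp: algebra_simps)
  also have "\<dots> = f x + hist_dot E P f"
    using assms by (simp add: sum.distrib hist_dot_def)
  finally show ?thesis .
qed

lemma hist_dot_eq_sum_list:
  assumes "finite E" "set P \<subseteq> E"
  shows "hist_dot E P f = sum_list (map f P)"
  using assms(2)
proof (induction P)
  case Nil
  then show ?case by (simp add: hist_dot_def Hist_def)
next
  case (Cons x P)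
  then show ?case using assms(1) by (simp add: hist_dot_Cons)
qed

lemma hist_dot_eq_sum_nth:
  assumes "finite E" "set P \<subseteq> E"
  shows "hist_dot E P f = (\<Sum>j<length P. f (P ! j))"
  using assms by (simp add: hist_dot_eq_sum_list sum_list_sum_nth atLeast0LessThan)

lemma hist_dot_diff:
  "hist_dot E P (\<lambda>A. f A - g A) = hist_dot E P f - hist_dot E P g"
  by (simp add: hist_dot_def right_diff_distrib sum_subtractf)

lemma sign_of_nonneg_iff: "sign_of x \<noteq> Neg \<longleftrightarrow> 0 \<le> x"
  by (simp add: sign_of_def)

lemma linear_mapping_cong:
  assumes "\<forall>P \<in> profiles E. f P = f' P"
  shows "linear_mapping E f \<longleftrightarrow> linear_mapping E f'"
  using assms unfolding linear_mapping_def by auto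

lemma linear_mapping_if_determined_by_signs:
  assumes "finite T"
    and "\<forall>P \<in> profiles E. \<forall>Q \<in> profiles E.
           (\<forall>t \<in> T. sign_of (hist_dot E P (v t)) = sign_of (hist_dot E Q (v t))) \<longrightarrow> f P = f Q"
  shows "linear_mapping E f"
proof -
  obtain L where L: "set L = T" using finite_list[OF assms(1)] by blast
  define pattern where
    "pattern P = map (\<lambda>i. sign_of (hist_dot E P (v (L ! i)))) [0..<length L]" for P
  \<comment> \<open>Any profile realising the sign pattern will do: f agrees on all of them.\<close>
  define g where "g \<sigma> = f (SOME Q. Q \<in> profiles E \<and> pattern Q = \<sigma>)" for \<sigma>
  have "f P = g (pattern P)" if P: "P \<in> profiles E" for P
  proof -
    define Q where "Q = (SOME Q. Q \<in> profiles E \<and> pattern Q = pattern P)"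
    have Q: "Q \<in> profiles E \<and> pattern Q = pattern P"
      unfolding Q_def by (rule someI[where x = P]) (simp add: P)
    have "sign_of (hist_dot E P (v t)) = sign_of (hist_dot E Q (v t))" if "t \<in> T" for t
    proof -
      obtain i where "i < length L" "L ! i = t"
        using \<open>t \<in> T\<close> L by (auto simp: in_set_conv_nth)
      then show ?thesis using arg_cong[OF conjunct2[OF Q], of "\<lambda>xs. xs ! i"]
        by (simp add: pattern_def)
    qed
    then have "f P = f Q" using assms(2) P Q by blast
    then show ?thesis by (simp add: g_def Q_def)
  qed
  then show ?thesis
    unfolding linear_mapping_def pattern_def
    by (intro exI[of _ "length L"] exI[of _ "\<lambda>i. v (L ! i)"] exI[of _ g]) blast
qed

definition max_score_rule :: "'c set \<Rightarrow> ('c \<Rightarrow> 'e \<Rightarrow> real) \<Rightarrow> 'e set \<Rightarrow> 'e list \<Rightarrow> 'c set" where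
  "max_score_rule C u E P = {W \<in> C. \<forall>W' \<in> C. hist_dot E P (u W') \<le> hist_dot E P (u W)}"

lemma linear_mapping_max_score_rule:
  assumes "finite C"
  shows "linear_mapping E (max_score_rule C u E)"
proof (rule linear_mapping_if_determined_by_signs)
  define v where "v t = (\<lambda>A. u (fst t) A - u (snd t) A)" for t
  show "finite (C \<times> C)" using assms by simp
  have beats_iff: "hist_dot E P (u W') \<le> hist_dot E P (u W) \<longleftrightarrow>
      sign_of (hist_dot E P (v (W, W'))) \<noteq> Neg" for P W W'
    by (simp add: v_def hist_dot_diff sign_of_nonneg_iff)
  show "\<forall>P \<in> profiles E. \<forall>Q \<in> profiles E.
      (\<forall>t \<in> C \<times> C. sign_of (hist_dot E P (v t)) = sign_of (hist_dot E Q (v t))) \<longrightarrow>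
      max_score_rule C u E P = max_score_rule C u E Q"
  proof (intro ballI impI)
    fix P Q
    assume same_signs: "\<forall>t \<in> C \<times> C. sign_of (hist_dot E P (v t)) = sign_of (hist_dot E Q (v t))"
    have "hist_dot E P (u W') \<le> hist_dot E P (u W) \<longleftrightarrow> hist_dot E Q (u W') \<le> hist_dot E Q (u W)"
      if "W \<in> C" "W' \<in> C" for W W'
      unfolding beats_iff using same_signs that by simp
    then show "max_score_rule C u E P = max_score_rule C u E Q"
      unfolding max_score_rule_def by blast
  qed
qed

lemma gabcs_eq_max_score_rule:
  assumes "P \<in> profiles (Pow {1..m})"
  shows "gabcs m k s P = max_score_rule (committees m k) (\<lambda>W A. s A W) (Pow {1..m}) P"
proof -
  have "set P \<subseteq> Pow {1..m}" using assms by (simp add: profiles_def)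
  then have "hist_dot (Pow {1..m}) P (\<lambda>A. s A W) = (\<Sum>j<length P. s (P ! j) W)" for W
    by (simp add: hist_dot_eq_sum_nth)
  then show ?thesis unfolding gabcs_def max_score_rule_def by presburger
qed

lemma finite_committees: "finite (committees m k)"
  unfolding committees_def by (rule finite_subset[of _ "Pow {1..m}"]) auto

theorem theorem1:
  fixes m k :: nat and s :: "nat set \<Rightarrow> nat set \<Rightarrow> real"
  assumes "k \<le> m"
  shows "linear_mapping (Pow {1..m}) (gabcs m k s)"
proof -
  let ?rule = "max_score_rule (committees m k) (\<lambda>W A. s A W) (Pow {1..m})"
  have "linear_mapping (Pow {1..m}) ?rule"
    by (rule linear_mapping_max_score_rule[OF finite_committees])
  moreover have "\<forall>P \<in> profiles (Pow {1..m}). ?rule P = gabcs m k s P"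
    by (simp add: gabcs_eq_max_score_rule)
  ultimately show ?thesis
    using linear_mapping_cong by metis
qed

end
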